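(* Let $D$ be a probability distribution on a finite set $\Omega$ with $m=\log|\Omega|\ge2$, and let $\varepsilon>0$, $\delta\in(0,1)$. Given access to $\mathsf{PROC}$ for $D$, the algorithm $\mathsf{EntropyEstimation}(\varepsilon,\delta)$ returns $\hat h$ satisfying $$\Pr\big[(1-\varepsilon)H(D)\le\hat h\le(1+\varepsilon)H(D)\big]\ge1-\delta,$$ where $H(D)=\sum_{x\in\Omega}D(x)\log\frac1{D(x)}$ is the Shannon entropy.
   Context: All logarithms are base 2, with $0\log\frac10=0$. A probability-revealing conditional sampling oracle $\mathsf{PROC}$ for $D$, on query $S\subseteq\Omega$ with $D(S)>0$, returns a pair $(x,D(x))$ where $x\in S$ is drawn with probability $D(x)/\sum_{y\in S}D(y)$, independently across queries (it returns the unconditional probability $D(x)$). The subroutine $\mathsf{SampleEst}(\bar S,t,\delta')$: set $T=\lceil\frac92\log\frac2{\delta'}\rceil$; for $i=1,\dots,T$, make $t$ queries $\mathsf{PROC}(\Omega\setminus\bar S)$ obtaining $(y_{ij},r_{ij})_{j\le t}$ and let $C_i=\frac1t\sum_{j=1}^t\log\frac1{r_{ij}}$; return the median of $C_1,\dots,C_T$. The algorithm $\mathsf{EntropyEstimation}(\varepsilon,\delta)$: for $i=1,\dots,\lceil\log(10/\delta)\rceil$: query $(x,r)\gets\mathsf{PROC}(\Omega)$; if $r>1/2$, set $t=\lceil\frac6{\varepsilon^2}(m+\log(m+\log m+2.5))\rceil$, compute $\hat h_{rem}=\mathsf{SampleEst}(\{x\},t,0.9\delta)$, and return $\hat h=(1-r)\hat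 h_{rem}+r\log\frac1r$ (provided $r<1$; if $r=1$ return $0$). If no round has $r>1/2$, set $t=\lceil\frac6{\varepsilon^2}(m+\log(m+\log m+1.1)-1)\rceil$ and return $\hat h=\mathsf{SampleEst}(\varnothing,t,0.9\delta)$. *)

theory Defs
  imports "HOL-Probability.Probability"
begin

text \<open>Logarithms are base 2 (log 2). Note log 2 0 = 0 in Isabelle, so 0 * log(1/0) = 0.\<close>

definition shannon_entropy :: "'a pmf \<Rightarrow> 'a set \<Rightarrow> real" where
  "shannon_entropy D \<Omega> = (\<Sum>x\<in>\<Omega>. pmf D x * log 2 (1 / pmf D x))"

text \<open>Probability-revealing conditional sampling oracle: query S returns (x, D x)
  with x drawn from D conditioned on S (requires D(S) > 0).\<close>
definition PROC :: "'a pmf \<Rightarrow> 'a set \<Rightarrow> ('a \<times> real) pmf" where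
  "PROC D S = map_pmf (\<lambda>x. (x, pmf D x)) (cond_pmf D S)"

fun iid_pmf :: "nat \<Rightarrow> 'b pmf \<Rightarrow> 'b list pmf" where
  "iid_pmf 0 p = return_pmf []"
| "iid_pmf (Suc n) p = bind_pmf p (\<lambda>x. map_pmf (Cons x) (iid_pmf n p))"

text \<open>Median of a nonempty list of reals (lower median for even length).\<close>
definition median :: "real list \<Rightarrow> real" where
  "median xs = sort xs ! ((length xs - 1) div 2)"

definition SampleEst_T :: "real \<Rightarrow> nat" where
  "SampleEst_T \<delta>' = nat \<lceil>9 / 2 * log 2 (2 / \<delta>')\<rceil>"

definition SampleEst_round :: "'a pmf \<Rightarrow> 'a set \<Rightarrow> 'a set \<Rightarrow> nat \<Rightarrow> real pmf" where
  "SampleEst_round D \<Omega> Sbar t =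
     map_pmf (\<lambda>ys. (\<Sum>y\<leftarrow>ys. log 2 (1 / snd y)) / real t) (iid_pmf t (PROC D (\<Omega> - Sbar)))"

definition SampleEst :: "'a pmf \<Rightarrow> 'a set \<Rightarrow> 'a set \<Rightarrow> nat \<Rightarrow> real \<Rightarrow> real pmf" where
  "SampleEst D \<Omega> Sbar t \<delta>' =
     map_pmf median (iid_pmf (SampleEst_T \<delta>') (SampleEst_round D \<Omega> Sbar t))"

definition t_heavy :: "real \<Rightarrow> real \<Rightarrow> nat" where
  "t_heavy m \<epsilon> = nat \<lceil>6 / \<epsilon>\<^sup>2 * (m + log 2 (m + log 2 m + 2.5))\<rceil>"

definition t_light :: "real \<Rightarrow> real \<Rightarrow> nat" where
  "t_light m \<epsilon> = nat \<lceil>6 / \<epsilon>\<^sup>2 * (m + log 2 (m + log 2 m + 1.1) - 1)\<rceil>"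

fun EE_loop :: "'a pmf \<Rightarrow> 'a set \<Rightarrow> real \<Rightarrow> real \<Rightarrow> nat \<Rightarrow> real pmf" where
  "EE_loop D \<Omega> \<epsilon> \<delta> 0 =
     SampleEst D \<Omega> {} (t_light (log 2 (card \<Omega>)) \<epsilon>) (0.9 * \<delta>)"
| "EE_loop D \<Omega> \<epsilon> \<delta> (Suc k) =
     bind_pmf (PROC D \<Omega>) (\<lambda>(x, r).
       if r > 1/2 then
         (if r = 1 then return_pmf 0
          else map_pmf (\<lambda>h. (1 - r) * h + r * log 2 (1 / r))
                 (SampleEst D \<Omega> {x} (t_heavy (log 2 (card \<Omega>)) \<epsilon>) (0.9 * \<delta>)))
       else EE_loop D \<Omega> \<epsilon> \<delta> k)"

definition EntropyEstimation :: "'a pmf \<Rightarrow> 'a set \<Rightarrow> real \<Rightarrow> real \<Rightarrow> real pmf" where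
  "EntropyEstimation D \<Omega> \<epsilon> \<delta> = EE_loop D \<Omega> \<epsilon> \<delta> (nat \<lceil>log 2 (10 / \<delta>)\<rceil>)"

end

theory Submission
  imports Defs
begin

text \<open>Each round of SampleEst averages \<open>t\<close> independent copies of the surprisal \<open>log (1/D(y))\<close>
  of a sample from \<open>D\<close> conditioned on the query set. Its mean \<open>\<mu>\<close> is the conditional entropy, so by
  Chebyshev a round misses \<open>[(1-\<epsilon>)\<mu>, (1+\<epsilon>)\<mu>]\<close> with probability at most \<open>Var/(t\<epsilon>\<^sup>2\<mu>\<^sup>2) \<le> 1/6\<close>, and
  the median of \<open>T\<close> rounds misses it only if half of the rounds do, which has probability at most
  \<open>(2/3)\<^bsup>T/2\<^esup> \<le> \<delta>'\<close>.

  The variance is bounded through the second moment \<open>\<Sum> w log\<^sup>2(1/w)\<close>: below the threshold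
  \<open>log (1/w) \<le> 2m + 2\<close> the summand is dominated by a linear function of \<open>w log (1/w)\<close>, and the at most
  \<open>2\<^sup>m\<close> points above it contribute at most \<open>m + 1\<close> in total. This gives \<open>Var \<le> K \<mu>\<^sup>2\<close> as soon as
  \<open>\<mu> \<ge> 1\<close>, which holds when every mass is at most \<open>1/2\<close>. Otherwise there is a unique heavy point
  \<open>x\<^sub>0\<close>; the loop draws it except with probability \<open>2\<^sup>-\<^sup>k \<le> \<delta>/10\<close>, conditioning on \<open>\<Omega> - {x\<^sub>0}\<close> shifts
  every surprisal by \<open>log (1/(1 - D(x\<^sub>0))) \<ge> 1\<close>, and \<open>H = D(x\<^sub>0) log (1/D(x\<^sub>0)) + (1 - D(x\<^sub>0)) \<mu>\<close>
  transfers the relative error from \<open>\<mu>\<close> to \<open>H\<close>.\<close>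

definition rel_interval :: "real \<Rightarrow> real \<Rightarrow> real set" where
  "rel_interval \<epsilon> \<mu> = {(1 - \<epsilon>) * \<mu> .. (1 + \<epsilon>) * \<mu>}"

lemma affine_mem_rel_interval:
  assumes "z \<in> rel_interval \<epsilon> \<mu>" and "0 \<le> \<epsilon>" "0 \<le> c" "0 \<le> b"
  shows "c * z + b \<in> rel_interval \<epsilon> (c * \<mu> + b)"
proof -
  have "c * ((1 - \<epsilon>) * \<mu>) \<le> c * z" "c * z \<le> c * ((1 + \<epsilon>) * \<mu>)"
    using assms by (auto simp: rel_interval_def intro: mult_left_mono)
  moreover have "0 \<le> \<epsilon> * b" using assms by simp
  ultimately show ?thesis by (simp add: rel_interval_def algebra_simps)
qed

lemma two_powr_ge_quadratic:
  assumes "0 \<le> u"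
  shows "1 + u/2 + u^2/8 \<le> (2::real) powr u"
proof -
  have ln2: "1/2 \<le> ln (2::real)"
    using ln_le_cancel_iff[of "exp (1/2)" 2] exp_half_le2 by simp
  then have lin: "u / 2 \<le> u * ln 2"
    using assms by (metis mult.commute mult_left_mono times_divide_eq_left mult_1)
  then have "(u/2)^2 \<le> (u * ln 2)^2"
    using assms by (intro power_mono) auto
  moreover have "1 + u * ln 2 + (u * ln 2)^2 / 2 \<le> exp (u * ln 2)"
    by (rule exp_lower_Taylor_quadratic) (use assms in simp)
  ultimately show ?thesis
    using lin by (simp add: powr_def mult.commute power_divide)
qed

lemma two_powr_ge_add_two:
  assumes "2 \<le> m"
  shows "m + 2 \<le> (2::real) powr m"
proof -
  have "2 * m = 4 * (1 + (m - 2) / 2)" by (simp add: field_simps)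
  also have "\<dots> \<le> 4 * 2 powr (m - 2)"
    using two_powr_ge_quadratic[of "m - 2"] assms by (smt (verit) zero_le_power2 divide_nonneg_pos)
  also have "\<dots> = 2 powr m" by (simp add: powr_diff)
  finally show ?thesis using assms by linarith
qed

lemma log_offset_ge_two:
  assumes "2 \<le> m" "1 \<le> c"
  shows "2 \<le> log 2 (m + log 2 m + c)"
proof -
  have "1 \<le> log 2 m" using assms by (simp add: le_log_iff)
  then have "4 \<le> m + log 2 m + c" using assms by linarith
  then show ?thesis by (simp add: le_log_iff)
qed

text \<open>Writing \<open>L = M + u\<close>, this compares \<open>(1 + u/M)\<^sup>2\<close> with the quadratic lower bound for \<open>2\<^sup>u\<close>,
  which needs \<open>M \<ge> 6\<close>.\<close>
lemma square_mult_two_powr_neg_antimono: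
  fixes M L :: real
  assumes "6 \<le> M" "M \<le> L"
  shows "L^2 * 2 powr (-L) \<le> M^2 * 2 powr (-M)"
proof -
  define u where "u = L - M"
  have u: "0 \<le> u" using assms by (simp add: u_def)
  have "u / M \<le> u / 6" using assms u by (intro divide_left_mono) auto
  then have "(1 + u/M)^2 \<le> (1 + u/6)^2" using assms u by (intro power_mono) auto
  also have "\<dots> = 1 + u/3 + u^2/36" by (simp add: power2_eq_square field_simps)
  also have "\<dots> \<le> 1 + u/2 + u^2/8"
  proof -
    have "u^2/36 \<le> u^2/8" by (intro divide_left_mono) auto
    then show ?thesis using u by linarith
  qed
  also have "\<dots> \<le> 2 powr u" by (rule two_powr_ge_quadratic[OF u])
  finally have "L^2 \<le> M^2 * 2 powr u"
    using assms by (simp add: u_def field_simps power2_eq_square mult_left_mono)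
  then have "L^2 * 2 powr (-L) \<le> M^2 * 2 powr u * 2 powr (-L)" by (simp add: mult_right_mono)
  also have "\<dots> = M^2 * 2 powr (-M)" by (simp add: u_def powr_add[symmetric])
  finally show ?thesis .
qed

section \<open>Second moment of the surprisal\<close>

definition tail_term :: "real \<Rightarrow> real \<Rightarrow> real" where
  "tail_term M L = (if M < L then 2 powr (-M) * (M * (M + 1)) else 0)"

lemma log_square_le_tail:
  assumes "0 < w" "6 \<le> M" "M < log 2 (1/w)"
  shows "w * (log 2 (1/w))^2 \<le> tail_term M (log 2 (1/w))"
proof -
  have "w = 2 powr (- log 2 (1/w))" using assms by (simp add: powr_minus)
  then have "w * (log 2 (1/w))^2 \<le> M^2 * 2 powr (-M)"
    using square_mult_two_powr_neg_antimono[of M "log 2 (1/w)"] assms by (simp add: mult.commute)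
  also have "\<dots> \<le> 2 powr (-M) * (M * (M + 1))"
    using assms by (simp add: power2_eq_square algebra_simps)
  finally show ?thesis using assms by (simp add: tail_term_def)
qed

lemma tail_term_nonneg: "0 \<le> M \<Longrightarrow> 0 \<le> tail_term M L"
  by (simp add: tail_term_def)

text \<open>For \<open>1 \<le> L \<le> M\<close> the parabola \<open>L\<^sup>2\<close> lies below its chord \<open>(M+1) L - M\<close> through \<open>L = 1\<close> and \<open>L = M\<close>.\<close>
lemma light_log_square_le:
  assumes "0 \<le> w" "w \<le> 1/2" "6 \<le> M"
  shows "w * (log 2 (1/w))^2 \<le> w * ((M + 1) * log 2 (1/w) - M) + tail_term M (log 2 (1/w))"
proof (cases "w = 0")
  case False
  then have w: "0 < w" using assms by simp
  define L where "L = log 2 (1/w)"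
  have L1: "1 \<le> L" unfolding L_def using w assms by (simp add: le_log_iff field_simps)
  show ?thesis
  proof (cases "M < L")
    case True
    have "(M + 1) * 1 \<le> (M + 1) * L" using L1 assms by (intro mult_left_mono) auto
    then have "0 \<le> w * ((M + 1) * L - M)" using w by simp
    then show ?thesis using log_square_le_tail[OF w assms(3)] True by (simp add: L_def)
  next
    case False
    have "0 \<le> (L - 1) * (M - L)" using False L1 by simp
    then have "w * L^2 \<le> w * ((M + 1) * L - M)"
      using w by (intro mult_left_mono) (auto simp: algebra_simps power2_eq_square)
    then show ?thesis using tail_term_nonneg[of M L] assms unfolding L_def by linarith
  qed
qed (use assms tail_term_nonneg in simp)

lemma log_square_le:
  assumes "0 \<le> q" "q \<le> 1" "6 \<le> M"
  shows "q * (log 2 (1/q))^2 \<le> M * (q * log 2 (1/q)) + tail_term M (log 2 (1/q))"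
proof (cases "q = 0")
  case False
  then have q: "0 < q" using assms by simp
  define L where "L = log 2 (1/q)"
  have L0: "0 \<le> L" unfolding L_def using q assms by simp
  show ?thesis
  proof (cases "M < L")
    case True
    have "0 \<le> M * (q * L)" using assms q L0 by simp
    then show ?thesis using log_square_le_tail[OF q assms(3)] True by (simp add: L_def)
  next
    case False
    then have "q * L^2 \<le> M * (q * L)"
      using q L0 by (simp add: power2_eq_square mult_left_mono mult_right_mono mult.left_commute)
    then show ?thesis using tail_term_nonneg[of M L] assms unfolding L_def by linarith
  qed
qed (use assms tail_term_nonneg in simp)

text \<open>The threshold \<open>2m + 2\<close> is chosen so that at most \<open>2\<^sup>m\<close> tail terms contribute at most \<open>m + 1\<close>.\<close>
lemma sum_tail_term_le:
  assumes "real (card A) \<le> 2 powr m" "2 \<le> m"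
  shows "(\<Sum>x\<in>A. tail_term (2*m + 2) (f x)) \<le> m + 1"
proof -
  define M where "M = 2*m + 2"
  have "(\<Sum>x\<in>A. tail_term M (f x)) \<le> real (card A) * (2 powr (-M) * (M * (M + 1)))"
    using assms by (intro sum_bounded_above) (simp add: tail_term_def M_def)
  also have "\<dots> \<le> 2 powr m * 2 powr (-M) * (M * (M + 1))"
    using assms by (simp add: M_def mult_right_mono)
  also have "\<dots> \<le> m + 1"
  proof -
    have "2 powr m * 2 powr (-M) = 1 / (4 * 2 powr m)"
      by (simp add: M_def powr_add[symmetric] powr_minus powr_add field_simps)
    moreover have "M * (M + 1) = (m + 1) * (4*m + 6)" by (simp add: M_def algebra_simps)
    moreover have "(m + 1) * (4*m + 6) \<le> (m + 1) * (4 * 2 powr m)"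
      using two_powr_ge_add_two[OF assms(2)] assms by (intro mult_left_mono) auto
    ultimately show ?thesis by (simp add: divide_le_eq)
  qed
  finally show ?thesis by (simp add: M_def)
qed

lemma weighted_variance_eq:
  fixes w f :: "'a \<Rightarrow> real"
  assumes "(\<Sum>x\<in>A. w x) = 1" "(\<Sum>x\<in>A. w x * f x) = \<mu>"
  shows "(\<Sum>x\<in>A. w x * (f x - \<mu>)^2) = (\<Sum>x\<in>A. w x * (f x)^2) - \<mu>^2"
proof -
  have "(\<Sum>x\<in>A. w x * (f x - \<mu>)^2) = (\<Sum>x\<in>A. w x * (f x)^2 - 2 * \<mu> * (w x * f x) + \<mu>^2 * w x)"
    by (intro sum.cong refl) (simp add: power2_eq_square algebra_simps)
  also have "\<dots> = (\<Sum>x\<in>A. w x * (f x)^2) - 2 * \<mu> * (\<Sum>x\<in>A. w x * f x) + \<mu>^2 * (\<Sum>x\<in>A. w x)"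
    by (simp add: sum.distrib sum_subtractf sum_distrib_left)
  finally show ?thesis using assms by (simp add: power2_eq_square)
qed

lemma weighted_entropy_nonneg:
  assumes "\<And>x. x \<in> A \<Longrightarrow> 0 \<le> w x \<and> w x \<le> 1"
  shows "0 \<le> (\<Sum>x\<in>A. w x * log 2 (1 / w x))"
proof (intro sum_nonneg)
  fix x assume "x \<in> A"
  then show "0 \<le> w x * log 2 (1 / w x)"
    using assms[of x] by (cases "w x = 0") auto
qed

lemma weighted_entropy_ge_one:
  assumes "\<And>x. x \<in> A \<Longrightarrow> 0 \<le> w x \<and> w x \<le> 1/2" "(\<Sum>x\<in>A. w x) = 1"
  shows "1 \<le> (\<Sum>x\<in>A. w x * log 2 (1 / w x))"
proof -
  have "w x \<le> w x * log 2 (1 / w x)" if "x \<in> A" for x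
  proof (cases "w x = 0")
    case False
    then have "0 < w x" "w x \<le> 1/2" using assms(1)[OF that] by auto
    then have "1 \<le> log 2 (1 / w x)" by (simp add: le_log_iff field_simps)
    then show ?thesis using \<open>0 < w x\<close> by simp
  qed simp
  then show ?thesis using assms(2) sum_mono[of A w] by fastforce
qed

lemma light_log_variance_le:
  assumes "real (card A) \<le> 2 powr m" "2 \<le> m"
    and w: "\<And>x. x \<in> A \<Longrightarrow> 0 \<le> w x \<and> w x \<le> 1/2" and sum1: "(\<Sum>x\<in>A. w x) = 1"
    and H: "H = (\<Sum>x\<in>A. w x * log 2 (1 / w x))"
  shows "(\<Sum>x\<in>A. w x * (log 2 (1 / w x) - H)^2) \<le> (m + log 2 (m + log 2 m + 1.1) - 1) * H^2"
proof -
  define M where "M = 2*m + 2"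
  define K where "K = m + log 2 (m + log 2 m + 1.1) - 1"
  have K: "m + 1 \<le> K" using log_offset_ge_two[OF assms(2)] by (simp add: K_def)
  have H1: "1 \<le> H" using weighted_entropy_ge_one[OF w sum1] H by simp
  have "(\<Sum>x\<in>A. w x * (log 2 (1 / w x))^2)
      \<le> (\<Sum>x\<in>A. (M + 1) * (w x * log 2 (1 / w x)) - M * w x + tail_term M (log 2 (1 / w x)))"
  proof (intro sum_mono)
    fix x assume "x \<in> A"
    then have "0 \<le> w x" "w x \<le> 1/2" "6 \<le> M" using w assms(2) by (auto simp: M_def)
    from light_log_square_le[OF this] show "w x * (log 2 (1 / w x))^2
        \<le> (M + 1) * (w x * log 2 (1 / w x)) - M * w x + tail_term M (log 2 (1 / w x))"
      by (simp add: algebra_simps)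
  qed
  also have "\<dots> = (M + 1) * H - M + (\<Sum>x\<in>A. tail_term M (log 2 (1 / w x)))"
    using sum1 H by (simp add: sum.distrib sum_subtractf sum_distrib_left[symmetric])
  also have "\<dots> \<le> (M + 1) * H - M + (m + 1)"
    using sum_tail_term_le[OF assms(1,2)] by (simp add: M_def)
  finally have second: "(\<Sum>x\<in>A. w x * (log 2 (1 / w x))^2) \<le> (M + 1) * H - M + (m + 1)" .
  have "(K + 1) * (H + 1) \<ge> (m + 2) * 2" using K H1 assms(2) by (intro mult_mono) auto
  then have "0 \<le> (H - 1) * ((K + 1) * (H + 1) - (M + 1))" using H1 by (simp add: M_def)
  then have "(M + 1) * H - M + (m + 1) - H^2 \<le> K * H^2"
    using K by (simp add: power2_eq_square algebra_simps)
  then show ?thesis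
    using second weighted_variance_eq[OF sum1 H[symmetric]] by (simp add: K_def)
qed

lemma log_variance_le_shifted:
  assumes "finite A" "real (card A) \<le> 2 powr m" "2 \<le> m" "1 \<le> s"
    and q: "\<And>x. x \<in> A \<Longrightarrow> 0 \<le> q x" and sum1: "(\<Sum>x\<in>A. q x) = 1"
    and h: "h = (\<Sum>x\<in>A. q x * log 2 (1 / q x))"
  shows "(\<Sum>x\<in>A. q x * (log 2 (1 / q x) - h)^2) \<le> (m + log 2 (m + log 2 m + 2.5)) * (s + h)^2"
proof -
  define M where "M = 2*m + 2"
  define K where "K = m + log 2 (m + log 2 m + 2.5)"
  have K: "m + 2 \<le> K" using log_offset_ge_two[OF assms(3)] by (simp add: K_def)
  have q1: "q x \<le> 1" if "x \<in> A" for x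
    using member_le_sum[OF that, of q] q assms(1) sum1 by simp
  have h0: "0 \<le> h" using weighted_entropy_nonneg[of A q] q q1 h by simp
  have "(\<Sum>x\<in>A. q x * (log 2 (1 / q x))^2)
      \<le> (\<Sum>x\<in>A. M * (q x * log 2 (1 / q x)) + tail_term M (log 2 (1 / q x)))"
    using log_square_le q q1 assms(3) by (intro sum_mono) (auto simp: M_def)
  also have "\<dots> \<le> M * h + (m + 1)"
    using sum_tail_term_le[OF assms(2,3)] h by (simp add: M_def sum.distrib sum_distrib_left)
  finally have second: "(\<Sum>x\<in>A. q x * (log 2 (1 / q x))^2) \<le> M * h + (m + 1)" .
  have "(1 + h)^2 \<le> (s + h)^2" using assms(4) h0 by (intro power_mono) auto
  then have "K * (1 + h)^2 \<le> K * (s + h)^2" using K assms(3) by (intro mult_left_mono) auto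
  moreover have "M * h \<le> 2 * K * h" using K h0 by (intro mult_right_mono) (auto simp: M_def)
  moreover have "0 \<le> (K + 1) * h^2" using K assms(3) by simp
  ultimately have "M * h + (m + 1) - h^2 \<le> K * (s + h)^2"
    using K by (simp add: power2_eq_square algebra_simps)
  then show ?thesis
    using second weighted_variance_eq[OF sum1 h[symmetric]] by (simp add: K_def)
qed

section \<open>Independent samples and the median trick\<close>

lemma measure_bind_pmf_finite:
  assumes "finite (set_pmf p)"
  shows "measure_pmf.prob (bind_pmf p f) B = (\<Sum>x\<in>set_pmf p. pmf p x * measure_pmf.prob (f x) B)"
proof -
  have "ennreal (measure_pmf.prob (bind_pmf p f) B) = emeasure (bind_pmf p f) B"
    by (simp add: measure_pmf.emeasure_eq_measure)
  also have "\<dots> = (\<integral>\<^sup>+x. emeasure (f x) B \<partial>p)" by simp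
  also have "\<dots> = (\<Sum>x\<in>set_pmf p. emeasure (f x) B * pmf p x)"
    by (rule nn_integral_measure_pmf_finite) (use assms in auto)
  also have "\<dots> = ennreal (\<Sum>x\<in>set_pmf p. pmf p x * measure_pmf.prob (f x) B)"
    by (subst sum_ennreal[symmetric]) (auto simp: measure_pmf.emeasure_eq_measure ennreal_mult' mult.commute)
  finally show ?thesis
    by (subst (asm) ennreal_inj) (auto intro!: sum_nonneg)
qed

lemma set_iid_pmf: "set_pmf (iid_pmf n p) \<subseteq> {xs. length xs = n \<and> set xs \<subseteq> set_pmf p}"
  by (induction n) (auto, blast)

lemma finite_set_iid_pmf:
  assumes "finite (set_pmf p)" shows "finite (set_pmf (iid_pmf n p))"
  by (induction n) (use assms in auto)

lemma measure_iid_pmf_Suc: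
  assumes "finite (set_pmf p)"
  shows "measure_pmf.prob (iid_pmf (Suc n) p) A =
     (\<Sum>x\<in>set_pmf p. pmf p x * measure_pmf.prob (iid_pmf n p) {xs. x # xs \<in> A})"
  by (simp add: measure_bind_pmf_finite[OF assms] vimage_def)

lemma expectation_iid_pmf_Suc:
  fixes g :: "'b list \<Rightarrow> real"
  assumes "finite (set_pmf p)"
  shows "measure_pmf.expectation (iid_pmf (Suc n) p) g =
     (\<Sum>x\<in>set_pmf p. pmf p x * measure_pmf.expectation (iid_pmf n p) (\<lambda>xs. g (x # xs)))"
  by (simp add: pmf_expectation_bind[where A="set_pmf p"] assms finite_set_iid_pmf)

lemma expectation_pmf_finite:
  fixes f :: "'b \<Rightarrow> real"
  assumes "finite (set_pmf p)"
  shows "measure_pmf.expectation p f = (\<Sum>x\<in>set_pmf p. pmf p x * f x)"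
  by (subst integral_measure_pmf_real[where A="set_pmf p"]) (use assms in \<open>auto simp: mult.commute\<close>)

lemma sum_pmf_set_pmf: "finite (set_pmf p) \<Longrightarrow> (\<Sum>x\<in>set_pmf p. pmf p x) = 1"
  using sum_pmf_eq_1[of "set_pmf p" p] by auto

lemma expectation_iid_sum:
  fixes h :: "'b \<Rightarrow> real"
  assumes fin: "finite (set_pmf p)"
  shows "measure_pmf.expectation (iid_pmf n p) (\<lambda>ys. \<Sum>y\<leftarrow>ys. h y) = n * measure_pmf.expectation p h"
proof (induction n)
  case 0 then show ?case by simp
next
  case (Suc n)
  have "measure_pmf.expectation (iid_pmf (Suc n) p) (\<lambda>ys. \<Sum>y\<leftarrow>ys. h y)
      = (\<Sum>x\<in>set_pmf p. pmf p x * measure_pmf.expectation (iid_pmf n p) (\<lambda>ys. h x + (\<Sum>y\<leftarrow>ys. h y)))"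
    by (subst expectation_iid_pmf_Suc[OF fin]) simp
  also have "\<dots> = (\<Sum>x\<in>set_pmf p. pmf p x * (h x + n * measure_pmf.expectation p h))"
    by (intro sum.cong refl)
       (simp add: integral_add integrable_measure_pmf_finite finite_set_iid_pmf fin Suc)
  also have "\<dots> = (\<Sum>x\<in>set_pmf p. pmf p x * h x) + n * measure_pmf.expectation p h * (\<Sum>x\<in>set_pmf p. pmf p x)"
    by (simp add: algebra_simps sum.distrib sum_distrib_left sum_distrib_right)
  also have "\<dots> = Suc n * measure_pmf.expectation p h"
    by (simp add: sum_pmf_set_pmf fin expectation_pmf_finite[OF fin] algebra_simps)
  finally show ?case .
qed

lemma expectation_iid_sum_deviation:
  fixes h :: "'b \<Rightarrow> real"
  assumes fin: "finite (set_pmf p)"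
  defines "\<mu> \<equiv> measure_pmf.expectation p h"
  shows "measure_pmf.expectation (iid_pmf n p) (\<lambda>ys. ((\<Sum>y\<leftarrow>ys. h y) - n * \<mu>)\<^sup>2)
       = n * measure_pmf.expectation p (\<lambda>y. (h y - \<mu>)\<^sup>2)"
proof (induction n)
  case 0 then show ?case by simp
next
  case (Suc n)
  let ?S = "\<lambda>ys. \<Sum>y\<leftarrow>ys. h y"
  have int: "\<And>f::'b list \<Rightarrow> real. integrable (measure_pmf (iid_pmf n p)) f"
    by (simp add: integrable_measure_pmf_finite finite_set_iid_pmf fin)
  have ES: "measure_pmf.expectation (iid_pmf n p) ?S = n * \<mu>"
    using expectation_iid_sum[OF fin] \<mu>_def by simp
  have step: "measure_pmf.expectation (iid_pmf n p) (\<lambda>ys. (h x + ?S ys - real (Suc n) * \<mu>)\<^sup>2)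
        = (h x - \<mu>)\<^sup>2 + n * measure_pmf.expectation p (\<lambda>y. (h y - \<mu>)\<^sup>2)" for x
  proof -
    have eq: "(\<lambda>ys. (h x + ?S ys - real (Suc n) * \<mu>)\<^sup>2) =
      (\<lambda>ys. (h x - \<mu>)\<^sup>2 + 2 * (h x - \<mu>) * (?S ys - n * \<mu>) + (?S ys - n * \<mu>)\<^sup>2)"
      by (rule ext) (simp add: power2_eq_square algebra_simps)
    have "measure_pmf.expectation (iid_pmf n p) (\<lambda>ys. (h x - \<mu>)\<^sup>2 + 2 * (h x - \<mu>) * (?S ys - n * \<mu>) + (?S ys - n * \<mu>)\<^sup>2)
       = (h x - \<mu>)\<^sup>2 + 2 * (h x - \<mu>) * (measure_pmf.expectation (iid_pmf n p) ?S - n * \<mu>)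
         + measure_pmf.expectation (iid_pmf n p) (\<lambda>ys. (?S ys - n * \<mu>)\<^sup>2)"
      by (simp add: integral_add integral_diff int)
    then show ?thesis using eq ES Suc by simp
  qed
  have "measure_pmf.expectation (iid_pmf (Suc n) p) (\<lambda>ys. (?S ys - real (Suc n) * \<mu>)\<^sup>2)
      = (\<Sum>x\<in>set_pmf p. pmf p x * measure_pmf.expectation (iid_pmf n p) (\<lambda>ys. (h x + ?S ys - real (Suc n) * \<mu>)\<^sup>2))"
    by (subst expectation_iid_pmf_Suc[OF fin]) simp
  also have "\<dots> = (\<Sum>x\<in>set_pmf p. pmf p x * ((h x - \<mu>)\<^sup>2 + n * measure_pmf.expectation p (\<lambda>y. (h y - \<mu>)\<^sup>2)))"
    using step by (intro sum.cong refl) (simp del: of_nat_Suc)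
  also have "\<dots> = (\<Sum>x\<in>set_pmf p. pmf p x * (h x - \<mu>)\<^sup>2) + n * measure_pmf.expectation p (\<lambda>y. (h y - \<mu>)\<^sup>2) * (\<Sum>x\<in>set_pmf p. pmf p x)"
    by (simp add: algebra_simps sum.distrib sum_distrib_left sum_distrib_right)
  also have "\<dots> = Suc n * measure_pmf.expectation p (\<lambda>y. (h y - \<mu>)\<^sup>2)"
    by (simp add: sum_pmf_set_pmf fin expectation_pmf_finite[OF fin] algebra_simps)
  finally show ?case .
qed

lemma iid_mean_deviation_prob:
  fixes h :: "'b \<Rightarrow> real"
  assumes fin: "finite (set_pmf p)" and t: "0 < t" and \<epsilon>: "0 < \<epsilon>"
    and \<mu>: "\<mu> = measure_pmf.expectation p h" and \<mu>pos: "0 < \<mu>"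
  shows "measure_pmf.prob (map_pmf (\<lambda>ys. (\<Sum>y\<leftarrow>ys. h y) / real t) (iid_pmf t p)) (- rel_interval \<epsilon> \<mu>)
         \<le> measure_pmf.expectation p (\<lambda>y. (h y - \<mu>)\<^sup>2) / (real t * \<epsilon>\<^sup>2 * \<mu>\<^sup>2)"
proof -
  let ?S = "\<lambda>ys. \<Sum>y\<leftarrow>ys. h y"
  let ?M = "measure_pmf (iid_pmf t p)"
  have sub: "(\<lambda>ys. ?S ys / real t) -` (- rel_interval \<epsilon> \<mu>)
      \<subseteq> {ys \<in> space ?M. (real t * \<epsilon> * \<mu>)\<^sup>2 \<le> (?S ys - real t * \<mu>)\<^sup>2}"
  proof
    fix ys assume "ys \<in> (\<lambda>ys. ?S ys / real t) -` (- rel_interval \<epsilon> \<mu>)"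
    then have "?S ys < (1 - \<epsilon>) * \<mu> * t \<or> ?S ys > (1 + \<epsilon>) * \<mu> * t"
      using t by (auto simp: rel_interval_def field_simps)
    then have "real t * \<epsilon> * \<mu> \<le> \<bar>?S ys - real t * \<mu>\<bar>"
      by (auto simp: algebra_simps)
    then have "(real t * \<epsilon> * \<mu>)\<^sup>2 \<le> (?S ys - real t * \<mu>)\<^sup>2"
      using t \<epsilon> \<mu>pos by (metis abs_le_square_iff abs_of_nonneg less_imp_le mult_nonneg_nonneg of_nat_0_le_iff)
    then show "ys \<in> {ys \<in> space ?M. (real t * \<epsilon> * \<mu>)\<^sup>2 \<le> (?S ys - real t * \<mu>)\<^sup>2}" by simp
  qed
  have "measure_pmf.prob (map_pmf (\<lambda>ys. ?S ys / real t) (iid_pmf t p)) (- rel_interval \<epsilon> \<mu>)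
     \<le> measure ?M {ys \<in> space ?M. (real t * \<epsilon> * \<mu>)\<^sup>2 \<le> (?S ys - real t * \<mu>)\<^sup>2}"
    unfolding measure_map_pmf by (rule measure_pmf.finite_measure_mono[OF sub]) simp
  also have "\<dots> \<le> measure_pmf.expectation (iid_pmf t p) (\<lambda>ys. (?S ys - real t * \<mu>)\<^sup>2) / (real t * \<epsilon> * \<mu>)\<^sup>2"
    by (rule integral_Markov_inequality_measure[where A="{}"])
       (use t \<epsilon> \<mu>pos in \<open>auto simp: integrable_measure_pmf_finite finite_set_iid_pmf fin\<close>)
  also have "\<dots> = real t * measure_pmf.expectation p (\<lambda>y. (h y - \<mu>)\<^sup>2) / (real t * \<epsilon> * \<mu>)\<^sup>2"
    using expectation_iid_sum_deviation[OF fin, where h=h and n=t] \<mu> by simp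
  also have "\<dots> = measure_pmf.expectation p (\<lambda>y. (h y - \<mu>)\<^sup>2) / (real t * \<epsilon>\<^sup>2 * \<mu>\<^sup>2)"
    using t by (simp add: power2_eq_square field_simps)
  finally show ?thesis .
qed

lemma measure_pmf_eq_sum_indicator:
  assumes "finite (set_pmf Z)"
  shows "measure_pmf.prob Z {z. B z} = (\<Sum>x\<in>set_pmf Z. pmf Z x * (if B x then 1 else 0))"
proof -
  have "measure_pmf.prob Z {z. B z} = measure_pmf.prob Z (set_pmf Z \<inter> {z. B z})"
    using measure_Int_set_pmf[of Z "{z. B z}"] by (simp add: Int_commute)
  also have "\<dots> = sum (pmf Z) (set_pmf Z \<inter> {z. B z})"
    using assms by (simp add: measure_measure_pmf_finite)
  also have "\<dots> = (\<Sum>x\<in>set_pmf Z. pmf Z x * (if B x then 1 else 0))"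
    using assms by (simp add: sum.inter_restrict if_distrib cong: if_cong)
  finally show ?thesis .
qed

lemma iid_count_ge_prob:
  fixes Z :: "'b pmf" and p :: real
  assumes fin: "finite (set_pmf Z)" and pB: "measure_pmf.prob Z {z. B z} \<le> p" and p0: "0 \<le> p"
  shows "measure_pmf.prob (iid_pmf T Z) {xs. k \<le> length (filter B xs)} \<le> (T choose k) * p^k"
proof (induction T arbitrary: k)
  case 0
  then show ?case by (cases k) auto
next
  case (Suc T)
  show ?case
  proof (cases k)
    case 0 then show ?thesis by simp
  next
    case (Suc k')
    let ?a = "(T choose k') * p^k'" and ?b = "(T choose Suc k') * p^Suc k'"
    have ab: "0 \<le> ?a" "0 \<le> ?b" using p0 by auto
    have "measure_pmf.prob (iid_pmf (Suc T) Z) {xs. k \<le> length (filter B xs)}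
       = (\<Sum>x\<in>set_pmf Z. pmf Z x * measure_pmf.prob (iid_pmf T Z) {xs. k \<le> length (filter B (x # xs))})"
      by (subst measure_iid_pmf_Suc[OF fin]) simp
    also have "\<dots> \<le> (\<Sum>x\<in>set_pmf Z. pmf Z x * ((if B x then 1 else 0) * ?a + ?b))"
    proof (intro sum_mono mult_left_mono)
      fix x
      show "measure_pmf.prob (iid_pmf T Z) {xs. k \<le> length (filter B (x # xs))} \<le> (if B x then 1 else 0) * ?a + ?b"
      proof (cases "B x")
        case True
        then show ?thesis using Suc.IH[of k'] \<open>k = Suc k'\<close> ab by simp
      next
        case False
        then show ?thesis using Suc.IH[of "Suc k'"] \<open>k = Suc k'\<close> by simp
      qed
    qed simp
    also have "\<dots> = measure_pmf.prob Z {z. B z} * ?a + ?b * (\<Sum>x\<in>set_pmf Z. pmf Z x)"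
      by (simp add: measure_pmf_eq_sum_indicator[OF fin] algebra_simps sum.distrib sum_distrib_left sum_distrib_right)
    also have "\<dots> \<le> p * ?a + ?b"
      using pB ab by (simp add: sum_pmf_set_pmf fin mult_right_mono)
    also have "\<dots> = (Suc T choose k) * p^k"
      using \<open>k = Suc k'\<close> by (simp add: algebra_simps)
    finally show ?thesis .
  qed
qed

lemma length_filter_sort: "length (filter P (sort xs)) = length (filter P (xs::real list))"
  by (metis mset_filter mset_sort size_mset)

lemma median_outside_count:
  fixes xs :: "real list"
  assumes len: "length xs = T" and T: "1 \<le> T" and out: "median xs \<notin> {a..b}"
  shows "(T + 1) div 2 \<le> length (filter (\<lambda>z. z \<notin> {a..b}) xs)"
proof -
  define s where "s = sort xs"
  define j where "j = (T - 1) div 2"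
  define I where "I = {i. i < T \<and> s ! i \<notin> {a..b}}"
  have ls: "length s = T" and srt: "sorted s" using len by (simp_all add: s_def)
  have jT: "j < T" using T by (simp add: j_def)
  have med: "median xs = s ! j" using len by (simp add: median_def s_def j_def)
  have cnt: "length (filter (\<lambda>z. z \<notin> {a..b}) xs) = card I"
    using length_filter_sort[of "\<lambda>z. z \<notin> {a..b}" xs] length_filter_conv_card[of _ s] ls
    by (simp add: s_def I_def)
  show ?thesis
  proof (cases "s ! j < a")
    case True
    have "{0..j} \<subseteq> I"
      using True jT ls srt by (auto simp: I_def dest: sorted_nth_mono[of s _ j])
    then have "card {0..j} \<le> card I" by (intro card_mono) (simp_all add: I_def)
    moreover have "(T + 1) div 2 = card {0..j}" using T by (simp add: j_def)
    ultimately show ?thesis using cnt by simp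
  next
    case False
    then have "b < s ! j" using out med by auto
    then have "{j..<T} \<subseteq> I"
      using ls srt by (auto simp: I_def dest: sorted_nth_mono[of s j])
    then have "card {j..<T} \<le> card I" by (intro card_mono) (simp_all add: I_def)
    moreover have "(T + 1) div 2 \<le> card {j..<T}" using T by (simp add: j_def)
    ultimately show ?thesis using cnt by simp
  qed
qed

lemma choose_half_mult_sixth_pow_le:
  "real (T choose ((T + 1) div 2)) * (1/6) ^ ((T + 1) div 2) \<le> (2/3) ^ ((T + 1) div 2)"
proof -
  let ?k = "(T + 1) div 2"
  have "real (T choose ?k) \<le> 2^T"
    using binomial_le_pow2[of T ?k] by (simp add: of_nat_le_iff[symmetric])
  also have "(2::real)^T \<le> 2^(2*?k)" by (intro power_increasing) auto
  also have "\<dots> = 4^?k" by (simp add: power_mult)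
  finally have "real (T choose ?k) * (1/6) ^ ?k \<le> 4^?k * (1/6) ^ ?k" by (simp add: mult_right_mono)
  also have "\<dots> = (2/3)^?k" by (simp add: power_mult_distrib[symmetric])
  finally show ?thesis .
qed

lemma median_iid_prob:
  fixes Z :: "real pmf"
  assumes fin: "finite (set_pmf Z)" and T: "1 \<le> T" and miss: "measure_pmf.prob Z (- {a..b}) \<le> 1/6"
  shows "1 - (2/3) ^ ((T + 1) div 2) \<le> measure_pmf.prob (map_pmf median (iid_pmf T Z)) {a..b}"
proof -
  let ?k = "(T + 1) div 2"
  have sub: "median -` (- {a..b}) \<inter> set_pmf (iid_pmf T Z) \<subseteq> {xs. ?k \<le> length (filter (\<lambda>z. z \<notin> {a..b}) xs)}"
    using set_iid_pmf median_outside_count[OF _ T] by fastforce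
  have "measure_pmf.prob (map_pmf median (iid_pmf T Z)) (- {a..b})
      = measure_pmf.prob (iid_pmf T Z) (median -` (- {a..b}) \<inter> set_pmf (iid_pmf T Z))"
    by (simp add: measure_Int_set_pmf)
  also have "\<dots> \<le> measure_pmf.prob (iid_pmf T Z) {xs. ?k \<le> length (filter (\<lambda>z. z \<notin> {a..b}) xs)}"
    by (rule measure_pmf.finite_measure_mono[OF sub]) simp
  also have "\<dots> \<le> (T choose ?k) * (1/6)^?k"
    using iid_count_ge_prob[OF fin, of "\<lambda>z. z \<notin> {a..b}"] miss by (simp add: Compl_eq)
  also have "\<dots> \<le> (2/3)^?k" by (rule choose_half_mult_sixth_pow_le)
  finally show ?thesis
    using measure_pmf.prob_compl[of "{a..b}" "map_pmf median (iid_pmf T Z)"] by (simp add: Compl_eq_Diff_UNIV)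
qed

lemma SampleEst_T_bound:
  assumes "0 < d" "d < 1"
  shows "SampleEst_T d \<ge> 1 \<and> (2/3::real)^((SampleEst_T d + 1) div 2) \<le> d"
proof -
  define L where "L = log 2 (2 / d)"
  have L1: "L > 1" using assms by (simp add: L_def less_log_iff field_simps)
  have TL: "real (SampleEst_T d) \<ge> 9/2 * L"
    unfolding SampleEst_T_def L_def by linarith
  then have T1: "SampleEst_T d \<ge> 1" using L1 by linarith
  define k where "k = (SampleEst_T d + 1) div 2"
  have kL: "real k \<ge> 2 * L"
  proof -
    have "2 * k \<ge> SampleEst_T d" unfolding k_def by simp
    then have "2 * real k \<ge> real (SampleEst_T d)" by linarith
    then show ?thesis using TL L1 by linarith
  qed
  have "(3/2::real)^k = (3/2) powr real k" by (simp add: powr_realpow)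
  also have "\<dots> \<ge> (3/2) powr (2 * L)" by (intro powr_mono kL) auto
  finally have a: "(3/2::real)^k \<ge> (3/2) powr (2 * L)" .
  have "(3/2::real) powr (2 * L) = ((3/2) powr 2) powr L" by (subst powr_powr) simp
  also have "\<dots> = (9/4) powr L" by (simp add: powr_numeral power2_eq_square)
  also have "\<dots> \<ge> 2 powr L" by (intro powr_mono2) (use L1 in auto)
  also have "2 powr L = 2 / d" unfolding L_def using assms by simp
  finally have "(3/2::real)^k \<ge> 2 / d" using a by linarith
  then have "(3/2::real)^k \<ge> 1 / d" using assms by (smt (verit) divide_right_mono)
  then have "(2/3::real)^k \<le> d"
    using assms by (simp add: power_divide field_simps)
  then show ?thesis using T1 k_def by simp
qed


section \<open>Correctness of SampleEst\<close>

lemma finite_set_PROC: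
  "finite (set_pmf D) \<Longrightarrow> set_pmf D \<inter> S \<noteq> {} \<Longrightarrow> finite (set_pmf (PROC D S))"
  unfolding PROC_def by (simp add: set_cond_pmf)

lemma expectation_PROC:
  fixes g :: "real \<Rightarrow> real"
  assumes fin: "finite S" and ne: "set_pmf D \<inter> S \<noteq> {}"
  shows "measure_pmf.expectation (PROC D S) (\<lambda>y. g (snd y))
       = (\<Sum>x\<in>S. pmf D x / measure_pmf.prob D S * g (pmf D x))"
proof -
  have "measure_pmf.expectation (PROC D S) (\<lambda>y. g (snd y))
      = measure_pmf.expectation (cond_pmf D S) (\<lambda>x. g (pmf D x))"
    unfolding PROC_def by simp
  also have "\<dots> = (\<Sum>x\<in>S. g (pmf D x) * pmf (cond_pmf D S) x)"
    by (rule integral_measure_pmf_real[OF fin]) (use ne in \<open>auto simp: set_cond_pmf\<close>)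
  also have "\<dots> = (\<Sum>x\<in>S. pmf D x / measure_pmf.prob D S * g (pmf D x))"
    by (intro sum.cong refl) (use ne in \<open>simp add: pmf_cond\<close>)
  finally show ?thesis .
qed

lemma SampleEst_prob:
  assumes finD: "finite (set_pmf D)" and ne: "set_pmf D \<inter> (\<Omega> - Sbar) \<noteq> {}"
    and t: "0 < t" and \<epsilon>: "0 < \<epsilon>" and d: "0 < d" "d < 1"
    and \<mu>: "\<mu> = measure_pmf.expectation (PROC D (\<Omega> - Sbar)) (\<lambda>y. log 2 (1 / snd y))"
    and \<mu>pos: "0 < \<mu>"
    and var: "measure_pmf.expectation (PROC D (\<Omega> - Sbar)) (\<lambda>y. (log 2 (1 / snd y) - \<mu>)\<^sup>2)
              \<le> real t * \<epsilon>\<^sup>2 * \<mu>\<^sup>2 / 6"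
  shows "1 - d \<le> measure_pmf.prob (SampleEst D \<Omega> Sbar t d) (rel_interval \<epsilon> \<mu>)"
proof -
  have finP: "finite (set_pmf (PROC D (\<Omega> - Sbar)))" by (rule finite_set_PROC[OF finD ne])
  have finZ: "finite (set_pmf (SampleEst_round D \<Omega> Sbar t))"
    unfolding SampleEst_round_def using finite_set_iid_pmf[OF finP] by simp
  have "measure_pmf.prob (SampleEst_round D \<Omega> Sbar t) (- rel_interval \<epsilon> \<mu>)
      \<le> measure_pmf.expectation (PROC D (\<Omega> - Sbar)) (\<lambda>y. (log 2 (1 / snd y) - \<mu>)\<^sup>2) / (real t * \<epsilon>\<^sup>2 * \<mu>\<^sup>2)"
    unfolding SampleEst_round_def by (rule iid_mean_deviation_prob[OF finP t \<epsilon> \<mu> \<mu>pos])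
  also have "\<dots> \<le> 1/6"
    using var t \<epsilon> \<mu>pos by (simp add: divide_le_eq)
  finally have "measure_pmf.prob (SampleEst_round D \<Omega> Sbar t) (- rel_interval \<epsilon> \<mu>) \<le> 1/6" .
  moreover have "1 \<le> SampleEst_T d" "(2/3) ^ ((SampleEst_T d + 1) div 2) \<le> d"
    using SampleEst_T_bound[OF d] by auto
  ultimately show ?thesis
    using median_iid_prob[OF finZ] unfolding SampleEst_def rel_interval_def by fastforce
qed

lemma sample_size_ge:
  assumes "0 < \<epsilon>" "0 < K"
  shows "0 < nat \<lceil>6 / \<epsilon>\<^sup>2 * K\<rceil>" and "K \<le> real (nat \<lceil>6 / \<epsilon>\<^sup>2 * K\<rceil>) * \<epsilon>\<^sup>2 / 6"
proof -
  show "0 < nat \<lceil>6 / \<epsilon>\<^sup>2 * K\<rceil>" using assms by simp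
  have "6 / \<epsilon>\<^sup>2 * K * \<epsilon>\<^sup>2 \<le> real (nat \<lceil>6 / \<epsilon>\<^sup>2 * K\<rceil>) * \<epsilon>\<^sup>2"
    using assms by (intro mult_right_mono) (linarith, simp)
  then show "K \<le> real (nat \<lceil>6 / \<epsilon>\<^sup>2 * K\<rceil>) * \<epsilon>\<^sup>2 / 6" using assms by (simp add: field_simps)
qed

lemma sum_weighted_log_scaled:
  assumes "0 < c" "\<And>x. x \<in> A \<Longrightarrow> 0 \<le> q x"
  shows "(\<Sum>x\<in>A. q x * g (log 2 (1 / (c * q x)))) = (\<Sum>x\<in>A. q x * g (log 2 (1 / c) + log 2 (1 / q x)))"
proof (intro sum.cong refl)
  fix x assume "x \<in> A"
  then show "q x * g (log 2 (1 / (c * q x))) = q x * g (log 2 (1 / c) + log 2 (1 / q x))"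
    using assms by (cases "q x = 0") (auto simp: log_divide log_mult)
qed

section \<open>The two branches of EntropyEstimation\<close>

locale entropy_instance =
  fixes D :: "'a pmf" and \<Omega> :: "'a set"
  assumes finite_\<Omega>: "finite \<Omega>" and set_pmf_subset: "set_pmf D \<subseteq> \<Omega>"
    and log_card_ge: "2 \<le> log 2 (real (card \<Omega>))"
begin

abbreviation m :: real where "m \<equiv> log 2 (real (card \<Omega>))"

abbreviation H :: real where "H \<equiv> shannon_entropy D \<Omega>"

lemma card_eq_two_powr: "real (card \<Omega>) = 2 powr m"
proof -
  have "card \<Omega> \<noteq> 0" using log_card_ge by (cases "card \<Omega> = 0") (auto simp: log_def)
  then show ?thesis by simp
qed

lemma finite_set_pmf: "finite (set_pmf D)"
  using finite_\<Omega> set_pmf_subset by (rule finite_subset[rotated])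

lemma sum_pmf_\<Omega>: "(\<Sum>x\<in>\<Omega>. pmf D x) = 1"
  using sum_pmf_eq_1[OF finite_\<Omega> set_pmf_subset] .

lemma prob_\<Omega>: "measure_pmf.prob D \<Omega> = 1"
  using sum_pmf_\<Omega> finite_\<Omega> by (simp add: measure_measure_pmf_finite)

lemma set_pmf_inter_\<Omega>: "set_pmf D \<inter> \<Omega> \<noteq> {}"
  using set_pmf_subset set_pmf_not_empty[of D] by auto

lemma cond_pmf_\<Omega>: "cond_pmf D \<Omega> = D"
  by (rule pmf_eqI)
     (use pmf_cond[OF set_pmf_inter_\<Omega>] prob_\<Omega> set_pmf_subset in \<open>auto simp: set_pmf_iff\<close>)

lemma light_SampleEst_prob:
  assumes light: "\<And>x. pmf D x \<le> 1/2" and \<epsilon>: "0 < \<epsilon>" and d: "0 < d" "d < 1"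
  shows "1 - d \<le> measure_pmf.prob (SampleEst D \<Omega> {} (t_light m \<epsilon>) d) (rel_interval \<epsilon> H)"
proof -
  define K where "K = m + log 2 (m + log 2 m + 1.1) - 1"
  have K: "m + 1 \<le> K" using log_offset_ge_two[OF log_card_ge] by (simp add: K_def)
  have t: "0 < t_light m \<epsilon>" "K \<le> real (t_light m \<epsilon>) * \<epsilon>\<^sup>2 / 6"
    using sample_size_ge[OF \<epsilon>, of K] K log_card_ge unfolding t_light_def K_def by auto
  have H: "H = (\<Sum>x\<in>\<Omega>. pmf D x * log 2 (1 / pmf D x))" by (simp add: shannon_entropy_def)
  have H1: "1 \<le> H" using weighted_entropy_ge_one[of \<Omega> "pmf D"] light sum_pmf_\<Omega> H by simp
  have \<mu>: "H = measure_pmf.expectation (PROC D (\<Omega> - {})) (\<lambda>y. log 2 (1 / snd y))"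
    using expectation_PROC[OF finite_\<Omega> set_pmf_inter_\<Omega>, of "\<lambda>r. log 2 (1/r)"] prob_\<Omega> H by simp
  have "measure_pmf.expectation (PROC D (\<Omega> - {})) (\<lambda>y. (log 2 (1 / snd y) - H)\<^sup>2)
      = (\<Sum>x\<in>\<Omega>. pmf D x * (log 2 (1 / pmf D x) - H)^2)"
    using expectation_PROC[OF finite_\<Omega> set_pmf_inter_\<Omega>, of "\<lambda>r. (log 2 (1/r) - H)^2"] prob_\<Omega> by simp
  also have "\<dots> \<le> K * H^2"
    using light_log_variance_le[of \<Omega> m "pmf D" H] card_eq_two_powr log_card_ge light sum_pmf_\<Omega> H
    by (simp add: K_def)
  also have "\<dots> \<le> real (t_light m \<epsilon>) * \<epsilon>\<^sup>2 / 6 * H^2"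
    using t(2) by (intro mult_right_mono) auto
  finally show ?thesis
    using H1 by (intro SampleEst_prob[OF finite_set_pmf _ t(1) \<epsilon> d \<mu>]) (auto simp: set_pmf_inter_\<Omega>)
qed

lemma sum_pmf_remove: "x0 \<in> \<Omega> \<Longrightarrow> (\<Sum>x\<in>\<Omega> - {x0}. pmf D x) = 1 - pmf D x0"
  using sum_pmf_\<Omega> sum_diff1[of \<Omega> "pmf D" x0] finite_\<Omega> by simp

lemma expectation_PROC_remove:
  assumes "pmf D x0 < 1" "x0 \<in> \<Omega>"
  shows "set_pmf D \<inter> (\<Omega> - {x0}) \<noteq> {}"
    and "measure_pmf.expectation (PROC D (\<Omega> - {x0})) (\<lambda>y. g (snd y))
       = (\<Sum>x\<in>\<Omega> - {x0}. pmf D x / (1 - pmf D x0) * g (pmf D x))"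
proof -
  show ne: "set_pmf D \<inter> (\<Omega> - {x0}) \<noteq> {}"
  proof
    assume "set_pmf D \<inter> (\<Omega> - {x0}) = {}"
    then have "(\<Sum>x\<in>\<Omega> - {x0}. pmf D x) = 0" by (intro sum.neutral) (auto simp: set_pmf_iff)
    then show False using sum_pmf_remove assms by simp
  qed
  have "measure_pmf.prob D (\<Omega> - {x0}) = 1 - pmf D x0"
    using sum_pmf_remove[OF assms(2)] finite_\<Omega> by (simp add: measure_measure_pmf_finite)
  then show "measure_pmf.expectation (PROC D (\<Omega> - {x0})) (\<lambda>y. g (snd y))
       = (\<Sum>x\<in>\<Omega> - {x0}. pmf D x / (1 - pmf D x0) * g (pmf D x))"
    using expectation_PROC[OF _ ne] finite_\<Omega> by simp
qed

lemma shannon_entropy_remove: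
  assumes "pmf D x0 < 1" "x0 \<in> \<Omega>"
  shows "H = pmf D x0 * log 2 (1 / pmf D x0)
           + (1 - pmf D x0) * measure_pmf.expectation (PROC D (\<Omega> - {x0})) (\<lambda>y. log 2 (1 / snd y))"
proof -
  have "(1 - pmf D x0) * measure_pmf.expectation (PROC D (\<Omega> - {x0})) (\<lambda>y. log 2 (1 / snd y))
      = (\<Sum>x\<in>\<Omega> - {x0}. pmf D x * log 2 (1 / pmf D x))"
    using expectation_PROC_remove(2)[OF assms, of "\<lambda>r. log 2 (1 / r)"] assms(1)
    by (simp add: sum_distrib_left)
  then show ?thesis
    using sum.remove[OF finite_\<Omega> assms(2), of "\<lambda>x. pmf D x * log 2 (1 / pmf D x)"]
    by (simp add: shannon_entropy_def)
qed

text \<open>Conditioning on \<open>\<Omega> - {x\<^sub>0}\<close> rescales the remaining mass by \<open>c = 1 - D(x\<^sub>0) \<le> 1/2\<close>, so the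
  surprisal \<open>log (1/D(x))\<close> is the surprisal of the conditional distribution shifted by \<open>log (1/c) \<ge> 1\<close>:
  the variance is unchanged while the mean grows by at least 1.\<close>
lemma heavy_SampleEst_prob:
  assumes heavy: "1/2 < pmf D x0" "pmf D x0 < 1" and \<epsilon>: "0 < \<epsilon>" and d: "0 < d" "d < 1"
  defines "\<mu> \<equiv> measure_pmf.expectation (PROC D (\<Omega> - {x0})) (\<lambda>y. log 2 (1 / snd y))"
  shows "1 - d \<le> measure_pmf.prob (SampleEst D \<Omega> {x0} (t_heavy m \<epsilon>) d) (rel_interval \<epsilon> \<mu>)"
proof -
  define c where "c = 1 - pmf D x0"
  define q where "q x = pmf D x / c" for x
  define h where "h = (\<Sum>x\<in>\<Omega> - {x0}. q x * log 2 (1 / q x))"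
  define K where "K = m + log 2 (m + log 2 m + 2.5)"
  have x0: "x0 \<in> \<Omega>" using heavy set_pmf_subset by (auto simp: set_pmf_iff)
  have c: "0 < c" "c \<le> 1/2" using heavy by (auto simp: c_def)
  have q0: "\<And>x. 0 \<le> q x" using c by (simp add: q_def)
  have sum_q: "(\<Sum>x\<in>\<Omega> - {x0}. q x) = 1"
    using sum_pmf_remove[OF x0] c by (simp add: q_def c_def flip: sum_divide_distrib)
  have h0: "0 \<le> h"
    using weighted_entropy_nonneg[of "\<Omega> - {x0}" q] member_le_sum[of _ "\<Omega> - {x0}" q] q0 sum_q finite_\<Omega>
    by (simp add: h_def)
  have s: "1 \<le> log 2 (1 / c)" using c by (simp add: le_log_iff field_simps)
  have E: "measure_pmf.expectation (PROC D (\<Omega> - {x0})) (\<lambda>y. g (log 2 (1 / snd y)))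
      = (\<Sum>x\<in>\<Omega> - {x0}. q x * g (log 2 (1 / c) + log 2 (1 / q x)))" for g :: "real \<Rightarrow> real"
  proof -
    have "measure_pmf.expectation (PROC D (\<Omega> - {x0})) (\<lambda>y. g (log 2 (1 / snd y)))
        = (\<Sum>x\<in>\<Omega> - {x0}. q x * g (log 2 (1 / (c * q x))))"
      using expectation_PROC_remove(2)[OF heavy(2) x0, of "\<lambda>r. g (log 2 (1 / r))"] c
      by (simp add: q_def flip: c_def)
    also have "\<dots> = (\<Sum>x\<in>\<Omega> - {x0}. q x * g (log 2 (1 / c) + log 2 (1 / q x)))"
      by (rule sum_weighted_log_scaled) (use c q0 in auto)
    finally show ?thesis .
  qed
  have \<mu>: "\<mu> = log 2 (1 / c) + h"
    using E[of "\<lambda>v. v"] sum_q by (simp add: \<mu>_def h_def distrib_left sum.distrib flip: sum_distrib_right)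
  have K: "m + 2 \<le> K" using log_offset_ge_two[OF log_card_ge] by (simp add: K_def)
  have t: "0 < t_heavy m \<epsilon>" "K \<le> real (t_heavy m \<epsilon>) * \<epsilon>\<^sup>2 / 6"
    using sample_size_ge[OF \<epsilon>, of K] K log_card_ge unfolding t_heavy_def K_def by auto
  have "measure_pmf.expectation (PROC D (\<Omega> - {x0})) (\<lambda>y. (log 2 (1 / snd y) - \<mu>)\<^sup>2)
      = (\<Sum>x\<in>\<Omega> - {x0}. q x * (log 2 (1 / q x) - h)^2)"
    using E[of "\<lambda>v. (v - \<mu>)^2"] by (simp add: \<mu>)
  also have "\<dots> \<le> K * \<mu>^2"
    using log_variance_le_shifted[OF _ _ log_card_ge s q0 sum_q h_def] finite_\<Omega> x0
      card_mono[of \<Omega> "\<Omega> - {x0}"] card_eq_two_powr by (simp add: \<mu> K_def)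
  also have "\<dots> \<le> real (t_heavy m \<epsilon>) * \<epsilon>\<^sup>2 / 6 * \<mu>^2"
    using t(2) by (intro mult_right_mono) auto
  finally show ?thesis
    using s \<mu> h0 expectation_PROC_remove(1)[OF heavy(2) x0]
    by (intro SampleEst_prob[OF finite_set_pmf _ t(1) \<epsilon> d meta_eq_to_obj_eq[OF \<mu>_def]]) auto
qed

definition heavy_estimate :: "real \<Rightarrow> real \<Rightarrow> 'a \<Rightarrow> real \<Rightarrow> real pmf" where
  "heavy_estimate \<epsilon> d x r = (if r = 1 then return_pmf 0
     else map_pmf (\<lambda>h. (1 - r) * h + r * log 2 (1 / r)) (SampleEst D \<Omega> {x} (t_heavy m \<epsilon>) d))"

lemma heavy_estimate_prob:
  assumes heavy: "1/2 < pmf D x0" and \<epsilon>: "0 < \<epsilon>" and d: "0 < d" "d < 1"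
  shows "1 - d \<le> measure_pmf.prob (heavy_estimate \<epsilon> d x0 (pmf D x0)) (rel_interval \<epsilon> H)"
proof (cases "pmf D x0 = 1")
  case True
  have "x0 \<in> \<Omega>" using heavy set_pmf_subset by (auto simp: set_pmf_iff)
  then have "(\<Sum>x\<in>\<Omega> - {x0}. pmf D x) = 0" using sum_pmf_remove True by simp
  then have "\<forall>x\<in>\<Omega> - {x0}. pmf D x = 0" using finite_\<Omega> by (subst (asm) sum_nonneg_eq_0_iff) auto
  then have "H = 0"
    using True sum.remove[OF finite_\<Omega> \<open>x0 \<in> \<Omega>\<close>, of "\<lambda>x. pmf D x * log 2 (1 / pmf D x)"]
    by (simp add: shannon_entropy_def)
  then show ?thesis using True d by (simp add: heavy_estimate_def rel_interval_def)
next
  case False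
  let ?r = "pmf D x0"
  let ?\<mu> = "measure_pmf.expectation (PROC D (\<Omega> - {x0})) (\<lambda>y. log 2 (1 / snd y))"
  have r: "?r < 1" using False pmf_le_1[of D x0] by linarith
  have x0: "x0 \<in> \<Omega>" using heavy set_pmf_subset by (auto simp: set_pmf_iff)
  note H = shannon_entropy_remove[OF r x0]
  have "0 \<le> ?r * log 2 (1 / ?r)" using heavy r by simp
  then have "(1 - ?r) * z + ?r * log 2 (1 / ?r) \<in> rel_interval \<epsilon> H" if "z \<in> rel_interval \<epsilon> ?\<mu>" for z
    using affine_mem_rel_interval[OF that, of "1 - ?r" "?r * log 2 (1 / ?r)"] \<epsilon> r
    unfolding H by (simp add: add.commute)
  then have "measure_pmf.prob (SampleEst D \<Omega> {x0} (t_heavy m \<epsilon>) d) (rel_interval \<epsilon> ?\<mu>)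
      \<le> measure_pmf.prob (heavy_estimate \<epsilon> d x0 ?r) (rel_interval \<epsilon> H)"
    using False by (auto simp: heavy_estimate_def intro: measure_pmf.finite_measure_mono)
  then show ?thesis using heavy_SampleEst_prob[OF heavy r \<epsilon> d] by linarith
qed

lemma EE_loop_Suc:
  "EE_loop D \<Omega> \<epsilon> \<delta> (Suc k) =
     D \<bind> (\<lambda>x. if 1/2 < pmf D x then heavy_estimate \<epsilon> (0.9 * \<delta>) x (pmf D x) else EE_loop D \<Omega> \<epsilon> \<delta> k)"
  unfolding heavy_estimate_def by (simp add: PROC_def cond_pmf_\<Omega> bind_map_pmf)

lemma EE_loop_light:
  assumes "\<And>x. pmf D x \<le> 1/2"
  shows "EE_loop D \<Omega> \<epsilon> \<delta> k = EE_loop D \<Omega> \<epsilon> \<delta> 0"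
proof (induction k)
  case (Suc k)
  have "(\<lambda>x. if 1/2 < pmf D x then heavy_estimate \<epsilon> (0.9 * \<delta>) x (pmf D x) else EE_loop D \<Omega> \<epsilon> \<delta> k)
      = (\<lambda>_. EE_loop D \<Omega> \<epsilon> \<delta> 0)"
    using assms Suc by (auto simp: not_less[symmetric])
  then show ?case by (simp only: EE_loop_Suc bind_pmf_const)
qed simp

text \<open>If \<open>x\<^sub>0\<close> is heavy then every other point is light, so each round either draws \<open>x\<^sub>0\<close> and
  succeeds with probability \<open>1 - 0.9\<delta>\<close>, or passes to the next round.\<close>
lemma EE_loop_heavy_prob:
  assumes heavy: "1/2 < pmf D x0" and \<epsilon>: "0 < \<epsilon>" and \<delta>: "0 < \<delta>" "\<delta> < 1"
  shows "1 - 0.9 * \<delta> - (1 - pmf D x0) ^ k \<le> measure_pmf.prob (EE_loop D \<Omega> \<epsilon> \<delta> k) (rel_interval \<epsilon> H)"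
proof (induction k)
  case 0
  show ?case
    using \<delta> measure_nonneg[of "measure_pmf (EE_loop D \<Omega> \<epsilon> \<delta> 0)" "rel_interval \<epsilon> H"] power_0[of "1 - pmf D x0"] by linarith
next
  case (Suc k)
  let ?p = "pmf D x0" and ?G = "rel_interval \<epsilon> H"
  let ?a = "1 - 0.9 * \<delta> - (1 - ?p) ^ k"
  have light: "pmf D x \<le> 1/2" if "x \<noteq> x0" for x
    using heavy measure_pmf.prob_le_1[of D "{x, x0}"] that by (simp add: measure_measure_pmf_finite)
  have x0: "x0 \<in> set_pmf D" using heavy by (auto simp: set_pmf_iff)
  have "(\<Sum>x\<in>set_pmf D. pmf D x * (?a + (if x = x0 then (1 - ?p) ^ k else 0)))
      = (\<Sum>x\<in>set_pmf D. pmf D x * ?a + (if x = x0 then pmf D x * (1 - ?p) ^ k else 0))"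
    by (intro sum.cong refl) (simp add: distrib_left)
  also have "\<dots> = (\<Sum>x\<in>set_pmf D. pmf D x) * ?a + ?p * (1 - ?p) ^ k"
    using x0 finite_set_pmf by (simp add: sum.distrib sum_distrib_right)
  also have "\<dots> = 1 - 0.9 * \<delta> - (1 - ?p) ^ Suc k"
    using sum_pmf_eq_1[OF finite_set_pmf order_refl] by (simp add: algebra_simps)
  finally have "1 - 0.9 * \<delta> - (1 - ?p) ^ Suc k
      = (\<Sum>x\<in>set_pmf D. pmf D x * (?a + (if x = x0 then (1 - ?p) ^ k else 0)))" ..
  also have "\<dots> \<le> (\<Sum>x\<in>set_pmf D. pmf D x * measure_pmf.prob
      (if 1/2 < pmf D x then heavy_estimate \<epsilon> (0.9 * \<delta>) x (pmf D x) else EE_loop D \<Omega> \<epsilon> \<delta> k) ?G)"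
  proof (intro sum_mono mult_left_mono)
    fix x
    show "?a + (if x = x0 then (1 - ?p) ^ k else 0) \<le> measure_pmf.prob
      (if 1/2 < pmf D x then heavy_estimate \<epsilon> (0.9 * \<delta>) x (pmf D x) else EE_loop D \<Omega> \<epsilon> \<delta> k) ?G"
    proof (cases "x = x0")
      case True
      then show ?thesis using heavy_estimate_prob[OF heavy \<epsilon>, of "0.9 * \<delta>"] \<delta> heavy by simp
    next
      case False
      then have "\<not> 1/2 < pmf D x" using light by (simp add: not_less)
      then show ?thesis using False Suc by simp
    qed
  qed simp
  also have "\<dots> = measure_pmf.prob (EE_loop D \<Omega> \<epsilon> \<delta> (Suc k)) ?G"
    unfolding EE_loop_Suc by (rule measure_bind_pmf_finite[OF finite_set_pmf, symmetric])
  finally show ?case .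
qed

end

lemma half_pow_nat_ceiling_log_le:
  assumes "0 < x"
  shows "(1/2::real) ^ nat \<lceil>log 2 x\<rceil> \<le> 1 / x"
proof -
  have "x = 2 powr log 2 x" using assms by simp
  also have "\<dots> \<le> 2 powr real (nat \<lceil>log 2 x\<rceil>)" by (intro powr_mono) linarith+
  also have "\<dots> = 2 ^ nat \<lceil>log 2 x\<rceil>" by (simp add: powr_realpow)
  finally show ?thesis using assms by (simp add: power_one_over field_simps)
qed

theorem mainTheorem4:
  fixes D :: "'a pmf" and \<Omega> :: "'a set" and \<epsilon> \<delta> :: real
  assumes "finite \<Omega>"
    and "set_pmf D \<subseteq> \<Omega>"
    and "log 2 (real (card \<Omega>)) \<ge> 2"
    and "\<epsilon> > 0" and "0 < \<delta>" and "\<delta> < 1"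
  shows "measure_pmf.prob (EntropyEstimation D \<Omega> \<epsilon> \<delta>)
           {h. (1 - \<epsilon>) * shannon_entropy D \<Omega> \<le> h \<and> h \<le> (1 + \<epsilon>) * shannon_entropy D \<Omega>}
         \<ge> 1 - \<delta>"
proof -
  interpret entropy_instance D \<Omega> using assms(1-3) by unfold_locales
  define k where "k = nat \<lceil>log 2 (10 / \<delta>)\<rceil>"
  have "EntropyEstimation D \<Omega> \<epsilon> \<delta> = EE_loop D \<Omega> \<epsilon> \<delta> k"
    by (simp add: EntropyEstimation_def k_def)
  moreover have "1 - \<delta> \<le> measure_pmf.prob (EE_loop D \<Omega> \<epsilon> \<delta> k) (rel_interval \<epsilon> H)"
  proof (cases "\<exists>x0. 1/2 < pmf D x0")
    case True
    then obtain x0 where heavy: "1/2 < pmf D x0" by blast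
    have "(1 - pmf D x0) ^ k \<le> (1/2) ^ k" using heavy pmf_le_1[of D x0] by (intro power_mono) auto
    also have "\<dots> \<le> \<delta> / 10" using half_pow_nat_ceiling_log_le[of "10 / \<delta>"] assms(5) by (simp add: k_def)
    finally show ?thesis using EE_loop_heavy_prob[OF heavy assms(4-6), of k] by linarith
  next
    case False
    then have light: "\<And>x. pmf D x \<le> 1/2" by (simp add: not_less)
    show ?thesis
      using EE_loop_light[OF light] light_SampleEst_prob[OF light assms(4), of "0.9 * \<delta>"] assms(5,6)
      by simp
  qed
  moreover have "rel_interval \<epsilon> H = {h. (1 - \<epsilon>) * H \<le> h \<and> h \<le> (1 + \<epsilon>) * H}"
    by (auto simp: rel_interval_def)
  ultimately show ?thesis by simp
qed

end
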